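(* Let $n$ be a positive integer. Then in the ring $\mathbb{Z}[x,q]$ (polynomials in $x$ whose coefficients are polynomials in $q$; congruences are modulo the indicated polynomials in $q$, coefficientwise in $x$), the following hold: $$(1+q)^2\sum_{k=0}^{n-1}q^{2k}[k+1]_{q^2}\,g_k(x;q^2)\equiv \sum_{k=0}^{n-1}q^{2k}g_k(x;q^2)\pmod{\prod_{\substack{d\mid n\\ d>1\text{ odd}}}\Phi_d(q)},$$ $$\sum_{k=0}^{n-1}q^{k}g_k(x;q)\equiv 0\pmod{\prod_{\substack{d\mid n\\ d\text{ even}}}\Phi_d(q)},$$ $$\sum_{j=0}^{n-1}x^j[j+1]_{q^2}{2j\brack j}_q\sum_{k=j}^{n-1}q^k{k\brack j}_q{k+1\brack j+1}_q\equiv 0\pmod{\prod_{\substack{d\mid n\\ d>2\text{ even}}}\Phi_d(q)}.$$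
   Context: The $q$-binomial coefficients are ${n\brack k}_q=\prod_{i=1}^{k}\frac{1-q^{n-k+i}}{1-q^i}$ for $0\le k\le n$ and $0$ otherwise. The $q$-integer is $[n]_q=\frac{1-q^n}{1-q}$. $\Phi_d(q)$ denotes the $d$-th cyclotomic polynomial. The $q$-Sun polynomials are $g_n(x;q)=\sum_{k=0}^{n}{n\brack k}_q^2{2k\brack k}_q x^k$. An empty product of cyclotomic polynomials equals $1$. *)

theory Defs
  imports "HOL-Computational_Algebra.Polynomial" Complex_Main
begin

text \<open>Polynomials in q: int poly.  Polynomials in x with coefficients in Z[q]: int poly poly.
  All q-analogues are parameterised by the polynomial Q substituted for q
  (Q = [:0,1:] gives q, Q = [:0,1:]^2 gives q^2).  Divisions are exact divisions in Z[q].\<close>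

definition qint :: "int poly \<Rightarrow> nat \<Rightarrow> int poly" where
  "qint Q n = (1 - Q ^ n) div (1 - Q)"

definition qbinom :: "int poly \<Rightarrow> nat \<Rightarrow> nat \<Rightarrow> int poly" where
  "qbinom Q n k = (if k \<le> n then
      (\<Prod>i=1..k. 1 - Q ^ (n - k + i)) div (\<Prod>i=1..k. 1 - Q ^ i) else 0)"

definition gsun :: "int poly \<Rightarrow> nat \<Rightarrow> int poly poly" where
  "gsun Q n = (\<Sum>k=0..n. monom (qbinom Q n k ^ 2 * qbinom Q (2*k) k) k)"

text \<open>The d-th cyclotomic polynomial: product of (q - zeta) over primitive d-th roots of unity,
  which has integer coefficients.\<close>
definition cyclo_complex :: "nat \<Rightarrow> complex poly" where
  "cyclo_complex d = (\<Prod>k\<in>{k. 1 \<le> k \<and> k \<le> d \<and> coprime k d}.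
      [:- cis (2 * pi * real k / real d), 1:])"

definition cyclotomic :: "nat \<Rightarrow> int poly" where
  "cyclotomic d = (THE p. map_poly of_int p = cyclo_complex d)"

definition congq :: "int poly poly \<Rightarrow> int poly poly \<Rightarrow> int poly \<Rightarrow> bool" where
  "congq A B M \<longleftrightarrow> (\<forall>i. M dvd coeff (A - B) i)"

end

theory Submission
  imports Defs
begin

text \<open>
  A product of distinct cyclotomic polynomials divides an integer polynomial as soon as the
  polynomial vanishes at all primitive d-th roots of unity for the relevant d, so each congruence
  is checked coefficientwise in x at a single root z of exact order d dividing n.
  Write k = a d + b and j = c d + e with b, e < d.  By the q-Lucas theorem every summand
  factors as a binomial coefficient in a and c times a term depending only on b, so it suffices
  that the sum over one period b < d vanishes (or that the central coefficient [2j, j] or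
  [j + 1] at \<open>z\<^sup>2\<close> is already zero).  For e < d, [b, e] at z is a polynomial of degree e in
  \<open>z\<^sup>b\<close>, and a sum over b < d of a polynomial in \<open>z\<^sup>b\<close> only sees its coefficients at multiples
  of d.  The degree bounds coming from 2e < d make all of these vanish, except in the boundary
  case d = 2e + 1 of the first congruence, where the top coefficient cancels by a direct
  computation.
\<close>

section \<open>Integer polynomials evaluated in a ring\<close>

lemma map_poly_of_int_add:
  "map_poly (of_int :: int \<Rightarrow> 'a::comm_ring_1) (p + q) = map_poly of_int p + map_poly of_int q"
  by (rule poly_eqI) (simp add: coeff_map_poly)

lemma map_poly_of_int_diff:
  "map_poly (of_int :: int \<Rightarrow> 'a::comm_ring_1) (p - q) = map_poly of_int p - map_poly of_int q"
  by (rule poly_eqI) (simp add: coeff_map_poly)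

lemma map_poly_of_int_mult:
  "map_poly (of_int :: int \<Rightarrow> 'a::comm_ring_1) (p * q) = map_poly of_int p * map_poly of_int q"
  by (rule poly_eqI) (simp add: coeff_map_poly coeff_mult of_int_sum)

lemma map_poly_of_int_power:
  "map_poly (of_int :: int \<Rightarrow> 'a::comm_ring_1) (p ^ n) = map_poly of_int p ^ n"
  by (induction n) (simp_all add: map_poly_of_int_mult)

lemma map_poly_of_int_prod:
  "map_poly (of_int :: int \<Rightarrow> 'a::comm_ring_1) (prod f A) = (\<Prod>x\<in>A. map_poly of_int (f x))"
  by (induction A rule: infinite_finite_induct) (simp_all add: map_poly_of_int_mult)

lemma map_poly_of_int_sum:
  "map_poly (of_int :: int \<Rightarrow> 'a::comm_ring_1) (sum f A) = (\<Sum>x\<in>A. map_poly of_int (f x))"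
  by (induction A rule: infinite_finite_induct) (simp_all add: map_poly_of_int_add)

lemma map_poly_of_int_inject:
  "map_poly (of_int :: int \<Rightarrow> 'a::{comm_ring_1,ring_char_0}) p = map_poly of_int q \<longleftrightarrow> p = q"
  by (metis coeff_map_poly of_int_0 of_int_eq_iff poly_eqI)

lemma degree_map_poly_of_int [simp]:
  "degree (map_poly (of_int :: int \<Rightarrow> 'a::{comm_ring_1,ring_char_0}) p) = degree p"
  by (rule degree_map_poly) simp

lemma coeff_map_poly_of_int [simp]: "coeff (map_poly of_int p) n = of_int (coeff p n)"
  by (simp add: coeff_map_poly)

text \<open>Pseudo-division by a monic M stays in \<open>\<int>[X]\<close>; the remainder is divisible by M over the
  field but of smaller degree, hence zero.\<close>

lemma monic_dvd_if_map_poly_of_int_dvd: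
  fixes M p :: "int poly"
  assumes monic: "lead_coeff M = 1"
    and dvd: "map_poly (of_int :: int \<Rightarrow> 'a::field_char_0) M dvd map_poly of_int p"
  shows "M dvd p"
proof -
  have "M \<noteq> 0" using monic by auto
  obtain r s where rs: "pseudo_divmod p M = (r, s)" by (cases "pseudo_divmod p M") auto
  from pseudo_divmod[OF \<open>M \<noteq> 0\<close> rs] monic
  have p: "p = M * r + s" and s: "s = 0 \<or> degree s < degree M" by auto
  have "map_poly of_int p = map_poly of_int M * map_poly of_int r + (map_poly of_int s :: 'a poly)"
    using p by (simp add: map_poly_of_int_add map_poly_of_int_mult)
  with dvd have "map_poly (of_int :: int \<Rightarrow> 'a) M dvd map_poly of_int s"
    by (metis dvd_add_right_iff dvd_triv_left)
  then have "s = 0"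
    using s dvd_imp_degree_le[of "map_poly (of_int :: int \<Rightarrow> 'a) M" "map_poly of_int s"]
    by (metis degree_map_poly_of_int leD map_poly_eq_0_iff of_int_eq_0_iff)
  with p show ?thesis by simp
qed

definition ipoly :: "'a::comm_ring_1 \<Rightarrow> int poly \<Rightarrow> 'a" where
  "ipoly z p = poly (map_poly of_int p) z"

lemma ipoly_add [simp]: "ipoly z (p + q) = ipoly z p + ipoly z q"
  by (simp add: ipoly_def map_poly_of_int_add)

lemma ipoly_diff [simp]: "ipoly z (p - q) = ipoly z p - ipoly z q"
  by (simp add: ipoly_def map_poly_of_int_diff)

lemma ipoly_mult [simp]: "ipoly z (p * q) = ipoly z p * ipoly z q"
  by (simp add: ipoly_def map_poly_of_int_mult)

lemma ipoly_0 [simp]: "ipoly z 0 = 0"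
  and ipoly_1 [simp]: "ipoly z 1 = 1"
  and ipoly_X [simp]: "ipoly z [:0, 1:] = z"
  by (simp_all add: ipoly_def map_poly_pCons)

lemma ipoly_power [simp]: "ipoly z (p ^ n) = ipoly z p ^ n"
  by (simp add: ipoly_def map_poly_of_int_power)

lemma ipoly_prod [simp]: "ipoly z (prod f A) = (\<Prod>x\<in>A. ipoly z (f x))"
  by (simp add: ipoly_def map_poly_of_int_prod poly_prod)

lemma ipoly_sum [simp]: "ipoly z (sum f A) = (\<Sum>x\<in>A. ipoly z (f x))"
  by (simp add: ipoly_def map_poly_of_int_sum poly_sum)

section \<open>Gaussian binomial coefficients\<close>

text \<open>Gaussian binomials by the q-Pascal rule, which makes sense in any commutative ring and
  commutes with evaluation, unlike the exact quotient \<open>qbinom\<close>.\<close>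

fun qbinomial :: "'a::comm_ring_1 \<Rightarrow> nat \<Rightarrow> nat \<Rightarrow> 'a" where
  "qbinomial q n 0 = 1"
| "qbinomial q 0 (Suc k) = 0"
| "qbinomial q (Suc n) (Suc k) = qbinomial q n k + q ^ Suc k * qbinomial q n (Suc k)"

lemma qbinomial_eq_0: "n < k \<Longrightarrow> qbinomial q n k = 0"
proof (induction n arbitrary: k)
  case 0
  then show ?case by (cases k) auto
next
  case (Suc n)
  then show ?case by (cases k) auto
qed

lemma qbinomial_same [simp]: "qbinomial q n n = 1"
  by (induction n) (simp_all add: qbinomial_eq_0)

lemma qbinomial_0_left: "qbinomial q 0 k = (if k = 0 then 1 else 0)"
  by (cases k) simp_all

lemma ipoly_qbinomial: "ipoly z (qbinomial Q n k) = qbinomial (ipoly z Q) n k"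
  by (induction Q n k rule: qbinomial.induct) simp_all

lemma qbinomial_mult_prod:
  assumes "k \<le> n"
  shows "qbinomial q n k * (\<Prod>i=1..k. 1 - q ^ i) = (\<Prod>i<k. 1 - q ^ (n - i))"
  using assms
proof (induction n arbitrary: k)
  case 0
  then show ?case by simp
next
  case (Suc n)
  show ?case
  proof (cases k)
    case 0
    then show ?thesis by simp
  next
    case (Suc j)
    have IH: "qbinomial q n j * (\<Prod>i=1..j. 1 - q ^ i) = (\<Prod>i<j. 1 - q ^ (n - i))"
      using Suc.IH Suc.prems Suc by simp
    have IH': "q ^ Suc j * qbinomial q n (Suc j) * (\<Prod>i=1..Suc j. 1 - q ^ i)
             = q ^ Suc j * (1 - q ^ (n - j)) * (\<Prod>i<j. 1 - q ^ (n - i))"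
    proof (cases "Suc j \<le> n")
      case True
      then show ?thesis
        using Suc.IH[OF True] by (simp add: mult.assoc mult.left_commute)
    next
      case False
      then show ?thesis using Suc Suc.prems by (simp add: qbinomial_eq_0)
    qed
    have pascal: "(1 - q ^ Suc j) + q ^ Suc j * (1 - q ^ (n - j)) = 1 - q ^ Suc n"
    proof -
      have "Suc j + (n - j) = Suc n"
        using Suc Suc.prems by simp
      then have "q ^ Suc j * q ^ (n - j) = q ^ Suc n"
        by (metis power_add)
      then show ?thesis by (simp add: algebra_simps)
    qed
    have "qbinomial q (Suc n) k * (\<Prod>i=1..k. 1 - q ^ i)
        = qbinomial q n j * (\<Prod>i=1..j. 1 - q ^ i) * (1 - q ^ Suc j)
          + q ^ Suc j * qbinomial q n (Suc j) * (\<Prod>i=1..Suc j. 1 - q ^ i)"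
      by (simp add: Suc algebra_simps)
    also have "\<dots> = ((1 - q ^ Suc j) + q ^ Suc j * (1 - q ^ (n - j))) * (\<Prod>i<j. 1 - q ^ (n - i))"
      by (simp only: IH IH') (simp add: algebra_simps)
    also have "\<dots> = (\<Prod>i<k. 1 - q ^ (Suc n - i))"
      unfolding pascal Suc by (subst prod.lessThan_Suc_shift) simp
    finally show ?thesis .
  qed
qed

lemma prod_atLeast1_atMost_eq_prod_lessThan_rev:
  fixes f :: "nat \<Rightarrow> 'a::comm_monoid_mult"
  assumes "k \<le> n"
  shows "(\<Prod>i=1..k. f (n - k + i)) = (\<Prod>i<k. f (n - i))"
proof (rule prod.reindex_bij_witness[where i = "\<lambda>i. k - i" and j = "\<lambda>i. k - i"])
  fix a assume "a \<in> {1..k}"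
  then show "k - (k - a) = a" "k - a \<in> {..<k}" "f (n - (k - a)) = f (n - k + a)"
    using assms by auto
next
  fix b assume "b \<in> {..<k}"
  then show "k - (k - b) = b" "k - b \<in> {1..k}"
    by auto
qed

lemma qbinom_eq_qbinomial:
  assumes "\<And>i. i > 0 \<Longrightarrow> 1 - Q ^ i \<noteq> 0"
  shows "qbinom Q n k = qbinomial Q n k"
proof (cases "k \<le> n")
  case True
  have "(\<Prod>i=1..k. 1 - Q ^ (n - k + i)) = qbinomial Q n k * (\<Prod>i=1..k. 1 - Q ^ i)"
    using prod_atLeast1_atMost_eq_prod_lessThan_rev[OF True, of "\<lambda>j. 1 - Q ^ j"]
      qbinomial_mult_prod[OF True, of Q] by simp
  moreover have "(\<Prod>i=1..k. 1 - Q ^ i) \<noteq> 0"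
    using assms by (auto simp: prod_zero_iff)
  ultimately show ?thesis
    unfolding qbinom_def using True by simp
next
  case False
  then show ?thesis by (simp add: qbinom_def qbinomial_eq_0)
qed

lemma one_minus_X_power_nonzero: "m > 0 \<Longrightarrow> 1 - [:0, 1:] ^ m \<noteq> (0 :: int poly)"
proof
  assume "m > 0" "1 - [:0, 1:] ^ m = (0 :: int poly)"
  then have "poly (1 - [:0, 1:] ^ m) (2 :: int) = 0" by simp
  then have "(2 :: int) ^ m = 1" by (simp add: poly_power)
  with \<open>m > 0\<close> show False by simp
qed

lemma qbinom_X_power: "m > 0 \<Longrightarrow> qbinom ([:0, 1:] ^ m) n k = qbinomial ([:0, 1:] ^ m) n k"
  by (rule qbinom_eq_qbinomial) (metis one_minus_X_power_nonzero power_mult nat_0_less_mult_iff)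

lemma qint_X_power: "m > 0 \<Longrightarrow> qint ([:0, 1:] ^ m) n = (\<Sum>i<n. ([:0, 1:] ^ m) ^ i)"
  unfolding qint_def one_diff_power_eq[of "[:0, 1:] ^ m" n]
  by (rule nonzero_mult_div_cancel_left) (rule one_minus_X_power_nonzero)

section \<open>Roots of unity and the q-Lucas theorem\<close>

definition exact_order :: "'a::comm_ring_1 \<Rightarrow> nat \<Rightarrow> bool" where
  "exact_order z d \<longleftrightarrow> (\<forall>m. z ^ m = 1 \<longleftrightarrow> d dvd m)"

lemma exact_order_power_eq_1_iff: "exact_order z d \<Longrightarrow> z ^ m = 1 \<longleftrightarrow> d dvd m"
  by (simp add: exact_order_def)

lemma exact_order_power_order: "exact_order z d \<Longrightarrow> z ^ d = 1"
  by (simp add: exact_order_def)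

lemma exact_order_nonzero: "exact_order z d \<Longrightarrow> d > 0 \<Longrightarrow> z \<noteq> 0"
  using exact_order_power_order[of z d] by (auto simp: power_0_left)

lemma exact_order_unique: "exact_order z d \<Longrightarrow> exact_order z e \<Longrightarrow> d = e"
  unfolding exact_order_def by (metis dvd_antisym dvd_refl)

lemma exact_order_power_mult_add: "exact_order z d \<Longrightarrow> z ^ (a * d + b) = z ^ b"
  by (simp add: exact_order_power_order power_add power_mult mult.commute[of a])

lemma exact_order_power_mod: "exact_order z d \<Longrightarrow> z ^ (k mod d) = z ^ k"
  using exact_order_power_mult_add[of z d "k div d" "k mod d"] by simp

lemma exact_order_square:
  assumes "exact_order z d" "odd d"
  shows "exact_order (z ^ 2) d"
  unfolding exact_order_def
  using assms by (simp add: exact_order_power_eq_1_iff coprime_dvd_mult_right_iff flip: power_mult)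

lemma exact_order_power_eq_imp_eq:
  fixes z :: "'a::idom"
  assumes z: "exact_order z d" and k: "k < d" "l < d" and eq: "z ^ k = z ^ l"
  shows "k = l"
proof -
  have *: False if "a < b" "b < d" "z ^ a = z ^ b" for a b
  proof -
    have "z ^ a * z ^ (b - a) = z ^ b"
      using \<open>a < b\<close> by (simp flip: power_add)
    then have "z ^ a * z ^ (b - a) = z ^ a * 1"
      using \<open>z ^ a = z ^ b\<close> by simp
    then have "d dvd b - a"
      using exact_order_nonzero[OF z] that by (simp add: exact_order_power_eq_1_iff[OF z, symmetric])
    with that show False by (auto dest: dvd_imp_le)
  qed
  show ?thesis
    using *[of k l] *[of l k] k eq by (cases k l rule: linorder_cases) auto
qed

lemma prod_one_minus_power_nonzero:
  fixes z :: "'a::idom"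
  assumes "exact_order z d" "k < d"
  shows "(\<Prod>i=1..k. 1 - z ^ i) \<noteq> 0"
  using assms by (auto simp: exact_order_power_eq_1_iff dest: dvd_imp_le)

lemma qbinomial_order_eq_0:
  fixes z :: "'a::idom"
  assumes z: "exact_order z d" and k: "0 < k" "k < d"
  shows "qbinomial z d k = 0"
proof -
  have "qbinomial z d k * (\<Prod>i=1..k. 1 - z ^ i) = (\<Prod>i<k. 1 - z ^ (d - i))"
    using qbinomial_mult_prod[of k d z] k by simp
  also have "\<dots> = 0"
    using k exact_order_power_order[OF z] by (auto intro!: prod_zero bexI[of _ 0])
  finally show ?thesis
    using prod_one_minus_power_nonzero[OF z \<open>k < d\<close>] by simp
qed

lemma qbinomial_add_order:
  fixes z :: "'a::idom"
  assumes z: "exact_order z d" and d: "d > 0"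
  shows "qbinomial z (n + d) k = qbinomial z n k + (if d \<le> k then qbinomial z n (k - d) else 0)"
proof (induction n arbitrary: k)
  case 0
  consider "k = 0" | "0 < k \<and> k < d" | "k = d" | "k > d" by linarith
  then show ?case
    by cases (use d qbinomial_order_eq_0[OF z] in \<open>simp_all add: qbinomial_eq_0 qbinomial_0_left\<close>)
next
  case (Suc n)
  show ?case
  proof (cases k)
    case 0
    then show ?thesis using d by simp
  next
    case (Suc j)
    have rec: "qbinomial z (Suc n + d) k = qbinomial z (n + d) j + z ^ Suc j * qbinomial z (n + d) (Suc j)"
      using Suc by simp
    consider "Suc j < d" | "Suc j = d" | "Suc j > d" by linarith
    then show ?thesis
    proof cases
      case 1
      then show ?thesis using rec Suc.IH[of j] Suc.IH[of "Suc j"] Suc by simp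
    next
      case 2
      then have d_eq: "d = Suc j" by simp
      have "z ^ Suc j = 1" using exact_order_power_order[OF z] d_eq by simp
      then show ?thesis using rec Suc.IH[of j] Suc.IH[of "Suc j"] Suc by (simp add: d_eq)
    next
      case 3
      then obtain i where i: "j - d = i" "Suc j - d = Suc i" by auto
      have "j = 1 * d + i"
        using 3 i by simp
      then have zj: "z ^ j = z ^ i"
        by (metis exact_order_power_mult_add[OF z])
      have "qbinomial z (Suc n + d) k
          = (qbinomial z n j + qbinomial z n i) + z ^ Suc i * (qbinomial z n (Suc j) + qbinomial z n (Suc i))"
        using rec Suc.IH[of j] Suc.IH[of "Suc j"] 3 i zj by simp
      also have "\<dots> = qbinomial z (Suc n) k + qbinomial z (Suc n) (k - d)"
        using Suc i zj by (simp add: algebra_simps)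
      finally show ?thesis using 3 Suc by simp
    qed
  qed
qed

lemma qbinomial_lucas:
  fixes z :: "'a::idom"
  assumes z: "exact_order z d" and "b < d" "e < d"
  shows "qbinomial z (a * d + b) (c * d + e) = of_nat (a choose c) * qbinomial z b e"
proof (induction a arbitrary: c)
  case 0
  then show ?case
    using \<open>b < d\<close> by (cases c) (simp_all add: qbinomial_eq_0 add.commute trans_less_add1)
next
  case (Suc a)
  have d: "d > 0" using \<open>b < d\<close> by simp
  have split: "Suc a * d + b = (a * d + b) + d" by simp
  show ?case
  proof (cases c)
    case 0
    then show ?thesis
      using \<open>e < d\<close> Suc.IH[of 0] by (simp only: split qbinomial_add_order[OF z d]) simp
  next
    case (Suc c')
    have "c * d + e - d = c' * d + e" using Suc by simp
    then have "qbinomial z (Suc a * d + b) (c * d + e)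
        = qbinomial z (a * d + b) (c * d + e) + qbinomial z (a * d + b) (c' * d + e)"
      using Suc by (simp only: split qbinomial_add_order[OF z d]) simp
    also have "\<dots> = of_nat (Suc a choose c) * qbinomial z b e"
      using Suc.IH[of c] Suc.IH[of c'] Suc by (simp add: algebra_simps)
    finally show ?thesis .
  qed
qed

lemma qbinomial_lucas_Suc:
  fixes z :: "'a::idom"
  assumes z: "exact_order z d" and b: "b < d" and e: "e + 1 < d"
  shows "qbinomial z (a * d + b + 1) (c * d + e + 1) = of_nat (a choose c) * qbinomial z (b + 1) (e + 1)"
proof (cases "b + 1 < d")
  case True
  then show ?thesis
    using qbinomial_lucas[OF z True e] by (simp add: add.assoc)
next
  case False
  then have b: "b + 1 = d" using b by simp
  have "qbinomial z (Suc a * d + 0) (c * d + (e + 1)) = of_nat (Suc a choose c) * qbinomial z 0 (e + 1)"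
    using b by (intro qbinomial_lucas[OF z _ e]) simp
  moreover have "a * d + b + 1 = Suc a * d + 0" "c * d + e + 1 = c * d + (e + 1)"
    using b by simp_all
  moreover have "qbinomial z 0 (e + 1) = 0"
    by (simp add: qbinomial_0_left)
  ultimately have "qbinomial z (a * d + b + 1) (c * d + e + 1) = 0"
    by (metis mult_zero_right)
  moreover have "qbinomial z (b + 1) (e + 1) = 0"
    unfolding b using qbinomial_order_eq_0[OF z] e by simp
  ultimately show ?thesis by simp
qed

lemma qbinomial_central_eq_0:
  fixes z :: "'a::idom"
  assumes z: "exact_order z d" and d: "d > 0" and e: "d \<le> 2 * (j mod d)"
  shows "qbinomial z (2 * j) j = 0"
proof -
  define c e' where "c = j div d" and "e' = j mod d"
  have j: "j = c * d + e'" by (simp add: c_def e'_def)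
  have "e' < d" using d by (simp add: e'_def)
  have "2 * j = (2 * c + 1) * d + (2 * e' - d)"
    using j e by (simp add: e'_def algebra_simps)
  moreover have "qbinomial z ((2 * c + 1) * d + (2 * e' - d)) (c * d + e')
      = of_nat ((2 * c + 1) choose c) * qbinomial z (2 * e' - d) e'"
    using \<open>e' < d\<close> by (intro qbinomial_lucas[OF z _ \<open>e' < d\<close>]) simp
  ultimately have "qbinomial z (2 * j) j = of_nat ((2 * c + 1) choose c) * qbinomial z (2 * e' - d) e'"
    using j by metis
  also have "qbinomial z (2 * e' - d) e' = 0"
    using \<open>e' < d\<close> e by (intro qbinomial_eq_0) (simp add: e'_def)
  finally show ?thesis by simp
qed

section \<open>Sums over one period of a root of unity\<close>

definition root_powers_poly :: "'a::comm_ring_1 \<Rightarrow> nat \<Rightarrow> 'a poly" where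
  "root_powers_poly w k = (\<Prod>i<k. [:- (w ^ i), 1:])"

lemma degree_prod_linear:
  "degree (\<Prod>x\<in>A. [:- r x, 1:] :: 'a::idom poly) = card A"
  by (subst degree_prod_sum_eq) auto

lemma coeff_prod_linear_card:
  "coeff (\<Prod>x\<in>A. [:- r x, 1:] :: 'a::idom poly) (card A) = 1"
  using lead_coeff_prod[of "\<lambda>x. [:- r x, 1:]" A] by (simp add: degree_prod_linear)

text \<open>The second-highest coefficient, shifted by \<open>pCons 0\<close> to avoid truncated subtraction.\<close>

lemma coeff_pCons_0_prod_linear_card:
  fixes r :: "'b \<Rightarrow> 'a::idom"
  assumes "finite A"
  shows "coeff (pCons 0 (\<Prod>x\<in>A. [:- r x, 1:])) (card A) = - (\<Sum>x\<in>A. r x)"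
  using assms
proof (induction A rule: finite_induct)
  case empty
  then show ?case by simp
next
  case (insert a A)
  let ?P = "\<Prod>x\<in>A. [:- r x, 1:]"
  have "(\<Prod>x\<in>insert a A. [:- r x, 1:]) = smult (- r a) ?P + pCons 0 ?P"
    using insert(1,2) by simp
  then have "coeff (pCons 0 (\<Prod>x\<in>insert a A. [:- r x, 1:])) (card (insert a A))
      = - r a * coeff ?P (card A) + coeff (pCons 0 ?P) (card A)"
    using insert(1,2) by simp
  then show ?case
    using insert coeff_prod_linear_card[of r A] by simp
qed

lemma root_powers_poly_square:
  "root_powers_poly w e ^ 2 = (\<Prod>x\<in>{..<e} \<times> {0::nat, 1}. [:- (w ^ fst x), 1:])"
proof -
  have "root_powers_poly w e ^ 2 = (\<Prod>i<e. [:- (w ^ i), 1:] ^ 2)"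
    by (simp add: root_powers_poly_def prod_power_distrib)
  also have "\<dots> = (\<Prod>i<e. \<Prod>y\<in>{0::nat, 1}. [:- (w ^ fst (i, y)), 1:])"
    by (simp add: power2_eq_square)
  also have "\<dots> = (\<Prod>x\<in>{..<e} \<times> {0::nat, 1}. [:- (w ^ fst x), 1:])"
    by (subst prod.cartesian_product) (simp add: case_prod_beta)
  finally show ?thesis .
qed

lemma degree_root_powers_poly [simp]:
  "degree (root_powers_poly (w :: 'a::idom) k) = k"
  unfolding root_powers_poly_def by (rule degree_prod_linear[of _ "{..<k}", simplified])

lemma
  fixes w :: "'a::idom"
  shows degree_root_powers_poly_square: "degree (root_powers_poly w e ^ 2) = 2 * e"
    and coeff_root_powers_poly_square_top: "coeff (root_powers_poly w e ^ 2) (2 * e) = 1"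
    and coeff_root_powers_poly_square_next:
      "coeff (pCons 0 (root_powers_poly w e ^ 2)) (2 * e) = - 2 * (\<Sum>i<e. w ^ i)"
proof -
  have card: "card ({..<e} \<times> {0::nat, 1}) = 2 * e"
    by (simp add: card_cartesian_product)
  have "(\<Sum>x\<in>{..<e} \<times> {0::nat, 1}. w ^ fst x) = (\<Sum>i<e. \<Sum>y\<in>{0::nat, 1}. w ^ fst (i, y))"
    by (subst sum.cartesian_product) (simp add: case_prod_beta)
  then have sum: "(\<Sum>x\<in>{..<e} \<times> {0::nat, 1}. w ^ fst x) = 2 * (\<Sum>i<e. w ^ i)"
    by (simp add: sum_distrib_left)
  show "degree (root_powers_poly w e ^ 2) = 2 * e"
    "coeff (root_powers_poly w e ^ 2) (2 * e) = 1"
    "coeff (pCons 0 (root_powers_poly w e ^ 2)) (2 * e) = - 2 * (\<Sum>i<e. w ^ i)"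
    unfolding root_powers_poly_square
    using degree_prod_linear[of "\<lambda>x. w ^ fst x" "{..<e} \<times> {0::nat, 1}", unfolded card]
      coeff_prod_linear_card[of "\<lambda>x. w ^ fst x" "{..<e} \<times> {0::nat, 1}", unfolded card]
      coeff_pCons_0_prod_linear_card[of "{..<e} \<times> {0::nat, 1}" "\<lambda>x. w ^ fst x", unfolded card sum]
    by simp_all
qed

lemma qbinomial_eq_poly_root_powers:
  fixes w :: "'a::field"
  assumes w: "exact_order w d" and k: "k < d"
  obtains c where "c \<noteq> 0" "\<And>n. qbinomial w n k = c * poly (root_powers_poly w k) (w ^ n)"
proof
  define F where "F = (\<Prod>i=1..k. 1 - w ^ i) * (\<Prod>i<k. - (w ^ i))"
  show "inverse F \<noteq> 0"
    using prod_one_minus_power_nonzero[OF w k] exact_order_nonzero[OF w] k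
    by (simp add: F_def)
  have "qbinomial w n k * F = poly (root_powers_poly w k) (w ^ n)" for n
  proof (cases "k \<le> n")
    case True
    have "poly (root_powers_poly w k) (w ^ n) = (\<Prod>i<k. - (w ^ i) * (1 - w ^ (n - i)))"
      unfolding root_powers_poly_def poly_prod
    proof (rule prod.cong[OF refl])
      fix i assume "i \<in> {..<k}"
      then have "w ^ n = w ^ i * w ^ (n - i)" using True by (simp flip: power_add)
      then show "poly [:- (w ^ i), 1:] (w ^ n) = - (w ^ i) * (1 - w ^ (n - i))"
        by (simp add: algebra_simps)
    qed
    also have "\<dots> = (\<Prod>i<k. - (w ^ i)) * (\<Prod>i<k. 1 - w ^ (n - i))"
      by (rule prod.distrib)
    also have "(\<Prod>i<k. 1 - w ^ (n - i)) = qbinomial w n k * (\<Prod>i=1..k. 1 - w ^ i)"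
      using qbinomial_mult_prod[OF True, of w] by simp
    finally show ?thesis by (simp add: F_def mult_ac)
  next
    case False
    then show ?thesis
      by (auto simp: root_powers_poly_def poly_prod qbinomial_eq_0 intro!: prod_zero bexI[of _ n])
  qed
  moreover have "F \<noteq> 0"
    using prod_one_minus_power_nonzero[OF w k] exact_order_nonzero[OF w] k by (simp add: F_def)
  ultimately show "qbinomial w n k = inverse F * poly (root_powers_poly w k) (w ^ n)" for n
    by (metis field_class.field_inverse mult.assoc mult.left_neutral mult.commute)
qed

lemma sum_poly_root_powers_eq_0:
  fixes w :: "'a::field"
  assumes w: "exact_order w d" and R: "\<And>j. d dvd j \<Longrightarrow> coeff R j = 0"
  shows "(\<Sum>b<d. poly R (w ^ b)) = 0"
proof -
  have zero: "coeff R j * (\<Sum>b<d. (w ^ j) ^ b) = 0" for j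
  proof (cases "d dvd j")
    case False
    then have "w ^ j \<noteq> 1" "(w ^ j) ^ d = 1"
      using w by (simp_all add: exact_order_power_eq_1_iff flip: power_mult)
    then show ?thesis by (simp add: geometric_sum)
  qed (simp add: R)
  have "(\<Sum>b<d. poly R (w ^ b)) = (\<Sum>j\<le>degree R. coeff R j * (\<Sum>b<d. (w ^ j) ^ b))"
    by (simp add: poly_altdef sum_distrib_left sum.swap[of _ "{..<d}"] mult.commute flip: power_mult)
  also have "\<dots> = 0"
    using zero by (intro sum.neutral) blast
  finally show ?thesis .
qed

lemma sum_poly_root_powers_eq_0_low_degree:
  fixes w :: "'a::field"
  assumes "exact_order w d" "coeff R 0 = 0" "degree R < d"
  shows "(\<Sum>b<d. poly R (w ^ b)) = 0"
proof (rule sum_poly_root_powers_eq_0[OF assms(1)])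
  fix j assume "d dvd j"
  then have "j = 0 \<or> degree R < j"
    using assms(3) by (auto dest: dvd_imp_le)
  then show "coeff R j = 0"
    using assms(2) by (auto intro: coeff_eq_0)
qed

lemma sum_root_power_qbinomial_square_eq_0:
  fixes z :: "'a::field"
  assumes z: "exact_order z d" and "even d" "2 * e < d"
  shows "(\<Sum>b<d. z ^ b * qbinomial z b e ^ 2) = 0"
proof -
  obtain c where qb: "\<And>n. qbinomial z n e = c * poly (root_powers_poly z e) (z ^ n)"
    using qbinomial_eq_poly_root_powers[OF z, of e] \<open>2 * e < d\<close> by auto
  define R where "R = [:0, 1:] * root_powers_poly z e ^ 2"
  have "degree R \<le> 1 + 2 * e"
    unfolding R_def by (rule order.trans[OF degree_mult_le]) (simp add: degree_root_powers_poly_square)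
  moreover have "2 * e + 1 \<noteq> d"
    using \<open>even d\<close> by auto
  ultimately have "(\<Sum>b<d. poly R (z ^ b)) = 0"
    using \<open>2 * e < d\<close> by (intro sum_poly_root_powers_eq_0_low_degree[OF z]) (simp_all add: R_def)
  moreover have "z ^ b * qbinomial z b e ^ 2 = c ^ 2 * poly R (z ^ b)" for b
    by (simp add: qb R_def power_mult_distrib)
  ultimately show ?thesis
    by (simp flip: sum_distrib_left)
qed

lemma sum_root_power_qbinomial_product_eq_0:
  fixes z :: "'a::field"
  assumes z: "exact_order z d" and "2 * e + 2 < d"
  shows "(\<Sum>b<d. z ^ b * qbinomial z b e * qbinomial z (b + 1) (e + 1)) = 0"
proof -
  obtain c where qb: "\<And>n. qbinomial z n e = c * poly (root_powers_poly z e) (z ^ n)"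
    using qbinomial_eq_poly_root_powers[OF z, of e] assms by auto
  obtain c' where qb': "\<And>n. qbinomial z n (e + 1) = c' * poly (root_powers_poly z (e + 1)) (z ^ n)"
    using qbinomial_eq_poly_root_powers[OF z, of "e + 1"] assms by auto
  define R where "R = [:0, 1:] * root_powers_poly z e * (root_powers_poly z (e + 1) \<circ>\<^sub>p [:0, z:])"
  have "degree ([:0, 1:] * root_powers_poly z e) \<le> 1 + e"
    by (rule order.trans[OF degree_mult_le]) simp
  moreover have "degree (root_powers_poly z (e + 1) \<circ>\<^sub>p [:0, z:]) \<le> e + 1"
    by (rule order.trans[OF degree_pcompose_le]) simp
  ultimately have "degree R \<le> (1 + e) + (e + 1)"
    unfolding R_def by (meson add_mono degree_mult_le order.trans)
  then have "(\<Sum>b<d. poly R (z ^ b)) = 0"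
    using assms by (intro sum_poly_root_powers_eq_0_low_degree[OF z]) (simp_all add: R_def)
  moreover have "z ^ b * qbinomial z b e * qbinomial z (b + 1) (e + 1) = c * c' * poly R (z ^ b)" for b
    unfolding qb qb' by (simp add: R_def poly_pcompose mult_ac)
  ultimately show ?thesis
    by (simp flip: sum_distrib_left)
qed

text \<open>When d = 2e + 1, this is the vanishing of the coefficient at d in the next lemma.\<close>

lemma leading_coefficient_cancellation:
  fixes z :: "'a::field"
  assumes "z \<noteq> 0" "z ^ 2 \<noteq> 1" "z ^ (2 * e) = 1 / z"
  shows "(- ((1 + z) ^ 2) / (z ^ 2 - 1) - 1) + ((1 + z) ^ 2 * z ^ 2 / (z ^ 2 - 1)) * (- 2 * (\<Sum>i<e. (z ^ 2) ^ i)) = 0"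
proof -
  have nz: "z ^ 2 - 1 \<noteq> 0" using assms(2) by simp
  have "(\<Sum>i<e. (z ^ 2) ^ i) = (1 / z - 1) / (z ^ 2 - 1)"
    using geometric_sum[OF assms(2), of e] assms(3) by (simp flip: power_mult)
  also have "\<dots> = (1 - z) / (z * (z ^ 2 - 1))"
    using assms(1) nz by (simp add: field_simps)
  finally have S: "(\<Sum>i<e. (z ^ 2) ^ i) = (1 - z) / (z * (z ^ 2 - 1))" .
  show ?thesis
    unfolding S using assms(1) nz by (simp add: divide_simps) algebra
qed

lemma sum_root_weighted_qbinomial_square_eq_0:
  fixes z :: "'a::field"
  assumes z: "exact_order z d" and "d > 1" "odd d" "2 * e < d"
  shows "(\<Sum>b<d. ((1 + z) ^ 2 * (z ^ 2) ^ b * (\<Sum>i<b + 1. (z ^ 2) ^ i) - (z ^ 2) ^ b)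
            * qbinomial (z ^ 2) b e ^ 2) = 0"
proof -
  define w where "w = z ^ 2"
  have w: "exact_order w d"
    unfolding w_def by (rule exact_order_square[OF z \<open>odd d\<close>])
  have "z \<noteq> 0"
    using exact_order_nonzero[OF z] \<open>d > 1\<close> by simp
  have "w \<noteq> 1"
    using exact_order_power_eq_1_iff[OF w, of 1] \<open>d > 1\<close> by auto
  obtain c where qb: "\<And>n. qbinomial w n e = c * poly (root_powers_poly w e) (w ^ n)"
    using qbinomial_eq_poly_root_powers[OF w, of e] \<open>2 * e < d\<close> by auto
  define \<alpha> where "\<alpha> = - ((1 + z) ^ 2) / (w - 1) - 1"
  define \<beta> where "\<beta> = (1 + z) ^ 2 * w / (w - 1)"
  define P where "P = root_powers_poly w e ^ 2"
  define R where "R = [:0, 1:] * ([:\<alpha>, \<beta>:] * P)"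
  have summand: "((1 + z) ^ 2 * w ^ b * (\<Sum>i<b + 1. w ^ i) - w ^ b) * qbinomial w b e ^ 2
      = c ^ 2 * poly R (w ^ b)" for b
  proof -
    have "(1 + z) ^ 2 * w ^ b * (\<Sum>i<b + 1. w ^ i) - w ^ b = w ^ b * (\<alpha> + \<beta> * w ^ b)"
      unfolding geometric_sum[OF \<open>w \<noteq> 1\<close>] \<alpha>_def \<beta>_def divide_inverse power_Suc2
        Suc_eq_plus1[symmetric] by algebra
    then show ?thesis
      unfolding qb by (simp add: R_def P_def power_mult_distrib algebra_simps)
  qed
  have "degree ([:\<alpha>, \<beta>:] * P) \<le> 1 + 2 * e"
    by (rule order.trans[OF degree_mult_le]) (simp add: P_def degree_root_powers_poly_square)
  then have deg: "degree R \<le> 1 + (1 + 2 * e)"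
    unfolding R_def by (intro order.trans[OF degree_mult_le]) simp
  have "(\<Sum>b<d. poly R (w ^ b)) = 0"
  proof (cases "2 * e + 2 < d")
    case True
    with deg show ?thesis
      by (intro sum_poly_root_powers_eq_0_low_degree[OF w]) (simp_all add: R_def)
  next
    case False
    then have d: "d = 2 * e + 1" "e \<ge> 1"
      using \<open>2 * e < d\<close> \<open>odd d\<close> \<open>d > 1\<close> by presburger+
    have "z ^ (2 * e) = 1 / z"
      using exact_order_power_order[OF z] d \<open>z \<noteq> 0\<close> by (simp add: field_simps)
    moreover have "coeff R d = \<alpha> * coeff P (2 * e) + \<beta> * coeff (pCons 0 P) (2 * e)"
      using d unfolding R_def by (simp add: coeff_pCons split: nat.splits)
    ultimately have "coeff R d = 0"
      using leading_coefficient_cancellation[OF \<open>z \<noteq> 0\<close>] \<open>w \<noteq> 1\<close>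
      unfolding P_def coeff_root_powers_poly_square_top coeff_root_powers_poly_square_next
        \<alpha>_def \<beta>_def w_def
      by (simp add: mult.assoc)
    show ?thesis
    proof (rule sum_poly_root_powers_eq_0[OF w])
      fix j assume "d dvd j"
      then obtain k where "j = d * k" by blast
      moreover have "d * k > degree R" if "k \<ge> 2"
        using deg d mult_le_mono2[OF that, of d] by simp
      ultimately have "j = 0 \<or> j = d \<or> degree R < j"
        by (cases "k \<ge> 2") (auto simp: not_le less_2_cases_iff)
      then show "coeff R j = 0"
        using \<open>coeff R d = 0\<close> by (auto simp: R_def intro: coeff_eq_0)
    qed
  qed
  then show ?thesis
    unfolding w_def[symmetric] summand by (simp flip: sum_distrib_left)
qed

section \<open>Sums over several periods\<close>

lemma sum_eq_0_if_factors_over_periods: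
  fixes g :: "nat \<Rightarrow> 'a::semiring_0"
  assumes "d dvd n"
    and "\<And>a b. b < d \<Longrightarrow> g (a * d + b) = u a * h b"
    and "(\<Sum>b<d. h b) = 0"
  shows "(\<Sum>k<n. g k) = 0"
proof -
  obtain N where "n = N * d" using \<open>d dvd n\<close> by (metis dvdE mult.commute)
  then have "(\<Sum>k<n. g k) = (\<Sum>a<N. \<Sum>b<d. g (a * d + b))"
    by (simp add: sum.nat_group[symmetric] sum.shift_bounds_nat_ivl[of _ 0, simplified]
        atLeast0LessThan add.commute)
  also have "\<dots> = (\<Sum>a<N. u a * (\<Sum>b<d. h b))"
    by (simp add: assms(2) sum_distrib_left)
  finally show ?thesis
    using assms(3) by simp
qed

lemma sum_power_qbinomial_square_times_central_eq_0:
  fixes z :: "'a::field"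
  assumes z: "exact_order z d" and "d > 0" "even d" "d dvd n"
  shows "(\<Sum>k<n. z ^ k * qbinomial z k j ^ 2) * qbinomial z (2 * j) j = 0"
proof (cases "d \<le> 2 * (j mod d)")
  case True
  then show ?thesis by (simp add: qbinomial_central_eq_0[OF z \<open>d > 0\<close>])
next
  case False
  define c e where "c = j div d" and "e = j mod d"
  have j: "j = c * d + e" and "e < d"
    using \<open>d > 0\<close> by (simp_all add: c_def e_def)
  have "(\<Sum>k<n. z ^ k * qbinomial z k j ^ 2) = 0"
  proof (rule sum_eq_0_if_factors_over_periods[OF \<open>d dvd n\<close>])
    fix a b assume "b < d"
    show "z ^ (a * d + b) * qbinomial z (a * d + b) j ^ 2
        = of_nat (a choose c) ^ 2 * (z ^ b * qbinomial z b e ^ 2)"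
      unfolding j qbinomial_lucas[OF z \<open>b < d\<close> \<open>e < d\<close>] exact_order_power_mult_add[OF z]
      by (simp add: power_mult_distrib)
  next
    show "(\<Sum>b<d. z ^ b * qbinomial z b e ^ 2) = 0"
      using False assms by (intro sum_root_power_qbinomial_square_eq_0[OF z]) (simp_all add: e_def)
  qed
  then show ?thesis by simp
qed

lemma sum_weighted_qbinomial_square_times_central_eq_0:
  fixes z :: "'a::field"
  assumes z: "exact_order z d" and "d > 1" "odd d" "d dvd n"
  shows "(\<Sum>k<n. ((1 + z) ^ 2 * (z ^ 2) ^ k * (\<Sum>i<k + 1. (z ^ 2) ^ i) - (z ^ 2) ^ k)
            * qbinomial (z ^ 2) k j ^ 2) * qbinomial (z ^ 2) (2 * j) j = 0"
proof -
  have w: "exact_order (z ^ 2) d"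
    using exact_order_square[OF z \<open>odd d\<close>] .
  show ?thesis
  proof (cases "d \<le> 2 * (j mod d)")
    case True
    then show ?thesis using \<open>d > 1\<close> by (simp add: qbinomial_central_eq_0[OF w])
  next
    case False
    define c e where "c = j div d" and "e = j mod d"
    have j: "j = c * d + e" and "e < d"
      using \<open>d > 1\<close> by (simp_all add: c_def e_def)
    have "z ^ 2 \<noteq> 1"
      using exact_order_power_eq_1_iff[OF w, of 1] \<open>d > 1\<close> by auto
    have qint_period: "(\<Sum>i<a * d + b + 1. (z ^ 2) ^ i) = (\<Sum>i<b + 1. (z ^ 2) ^ i)" for a b
    proof -
      have "(z ^ 2) ^ (a * d + b + 1) = (z ^ 2) ^ (b + 1)"
        using exact_order_power_mult_add[OF w, of a "b + 1"] by (simp add: add.assoc)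
      then show ?thesis
        unfolding geometric_sum[OF \<open>z ^ 2 \<noteq> 1\<close>] by (simp only:)
    qed
    have "(\<Sum>k<n. ((1 + z) ^ 2 * (z ^ 2) ^ k * (\<Sum>i<k + 1. (z ^ 2) ^ i) - (z ^ 2) ^ k)
            * qbinomial (z ^ 2) k j ^ 2) = 0"
    proof (rule sum_eq_0_if_factors_over_periods[OF \<open>d dvd n\<close>])
      fix a b assume "b < d"
      show "((1 + z) ^ 2 * (z ^ 2) ^ (a * d + b) * (\<Sum>i<a * d + b + 1. (z ^ 2) ^ i) - (z ^ 2) ^ (a * d + b))
            * qbinomial (z ^ 2) (a * d + b) j ^ 2
          = of_nat (a choose c) ^ 2 * (((1 + z) ^ 2 * (z ^ 2) ^ b * (\<Sum>i<b + 1. (z ^ 2) ^ i) - (z ^ 2) ^ b)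
            * qbinomial (z ^ 2) b e ^ 2)"
        unfolding j qbinomial_lucas[OF w \<open>b < d\<close> \<open>e < d\<close>] exact_order_power_mult_add[OF w] qint_period
        by (simp add: power_mult_distrib mult_ac)
    next
      show "(\<Sum>b<d. ((1 + z) ^ 2 * (z ^ 2) ^ b * (\<Sum>i<b + 1. (z ^ 2) ^ i) - (z ^ 2) ^ b)
            * qbinomial (z ^ 2) b e ^ 2) = 0"
        using False assms by (intro sum_root_weighted_qbinomial_square_eq_0[OF z]) (simp_all add: e_def)
    qed
    then show ?thesis by simp
  qed
qed

lemma qint_central_sum_product_eq_0:
  fixes z :: "'a::field"
  assumes z: "exact_order z d" and "d > 2" "even d" "d dvd n"
  shows "(\<Sum>i<j + 1. (z ^ 2) ^ i) * qbinomial z (2 * j) j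
           * (\<Sum>k<n. z ^ k * qbinomial z k j * qbinomial z (k + 1) (j + 1)) = 0"
proof -
  define c e where "c = j div d" and "e = j mod d"
  have j: "j = c * d + e" and "e < d"
    using \<open>d > 2\<close> by (simp_all add: c_def e_def)
  have "d \<le> 2 * e \<or> 2 * e + 2 = d \<or> 2 * e + 2 < d"
    using \<open>even d\<close> by presburger
  then consider "d \<le> 2 * e" | "2 * e + 2 = d" | "2 * e + 2 < d"
    by blast
  then show ?thesis
  proof cases
    case 1
    then show ?thesis using \<open>d > 2\<close> by (simp add: qbinomial_central_eq_0[OF z] e_def)
  next
    case 2
    \<comment> \<open>the factor \<open>[j + 1]\<close> at \<open>z\<^sup>2\<close> vanishes, as d divides 2(j + 1)\<close>
    have "z ^ 2 \<noteq> 1"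
      using exact_order_power_eq_1_iff[OF z, of 2] \<open>d > 2\<close> by (auto dest: dvd_imp_le)
    have "2 * (j + 1) = (2 * c + 1) * d + 0"
      using j 2 by (simp add: algebra_simps)
    then have "(z ^ 2) ^ (j + 1) = z ^ ((2 * c + 1) * d + 0)"
      by (simp only: power_mult[symmetric])
    then have "(z ^ 2) ^ (j + 1) = 1"
      by (simp only: exact_order_power_mult_add[OF z]) simp
    then have "(\<Sum>i<j + 1. (z ^ 2) ^ i) = 0"
      unfolding geometric_sum[OF \<open>z ^ 2 \<noteq> 1\<close>] by simp
    then show ?thesis by simp
  next
    case 3
    have "(\<Sum>k<n. z ^ k * qbinomial z k j * qbinomial z (k + 1) (j + 1)) = 0"
    proof (rule sum_eq_0_if_factors_over_periods[OF \<open>d dvd n\<close>])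
      fix a b assume "b < d"
      have "e + 1 < d" using 3 by simp
      show "z ^ (a * d + b) * qbinomial z (a * d + b) j * qbinomial z (a * d + b + 1) (j + 1)
          = of_nat (a choose c) ^ 2 * (z ^ b * qbinomial z b e * qbinomial z (b + 1) (e + 1))"
        unfolding j qbinomial_lucas[OF z \<open>b < d\<close> \<open>e < d\<close>] exact_order_power_mult_add[OF z]
          add.assoc[of "c * d" e 1, symmetric] qbinomial_lucas_Suc[OF z \<open>b < d\<close> \<open>e + 1 < d\<close>]
        by (simp add: power2_eq_square mult_ac)
    next
      show "(\<Sum>b<d. z ^ b * qbinomial z b e * qbinomial z (b + 1) (e + 1)) = 0"
        using 3 by (intro sum_root_power_qbinomial_product_eq_0[OF z]) simp
    qed
    then show ?thesis by simp
  qed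
qed

section \<open>Cyclotomic polynomials\<close>

definition unit_root :: "nat \<Rightarrow> nat \<Rightarrow> complex" where
  "unit_root d k = cis (2 * pi * real k / real d)"

definition primitive_roots :: "nat \<Rightarrow> complex set" where
  "primitive_roots d = unit_root d ` {k. 1 \<le> k \<and> k \<le> d \<and> coprime k d}"

lemma unit_root_power: "unit_root d k ^ m = unit_root d (k * m)"
  by (simp add: unit_root_def DeMoivre mult_ac)

lemma unit_root_eq_1_iff:
  assumes "d > 0"
  shows "unit_root d k = 1 \<longleftrightarrow> d dvd k"
proof
  assume "d dvd k"
  then obtain t where "k = d * t" by blast
  then have "2 * pi * real k / real d = 2 * pi * real t"
    using assms by (simp add: field_simps)
  then show "unit_root d k = 1"
    unfolding unit_root_def by (metis Ints_of_nat cis_multiple_2pi)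
next
  assume "unit_root d k = 1"
  then have "cos (2 * pi * real k / real d) = 1"
    unfolding unit_root_def by (simp add: complex_eq_iff)
  then obtain m :: int where "2 * pi * real k / real d = real_of_int m * 2 * pi"
    by (auto simp: cos_one_2pi_int)
  then have "real k = real_of_int m * real d"
    using assms by (simp add: field_simps)
  then have "int k = m * int d"
    by (metis of_int_eq_iff of_int_mult of_int_of_nat_eq)
  then show "d dvd k"
    by (metis dvd_triv_right int_dvd_int_iff)
qed

lemma exact_order_unit_root:
  assumes "d > 0" "coprime k d"
  shows "exact_order (unit_root d k) d"
  unfolding exact_order_def unit_root_power unit_root_eq_1_iff[OF \<open>d > 0\<close>]
  using assms(2) by (simp add: coprime_dvd_mult_right_iff coprime_commute)

lemma exact_order_primitive_root: "d > 0 \<Longrightarrow> z \<in> primitive_roots d \<Longrightarrow> exact_order z d"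
  unfolding primitive_roots_def using exact_order_unit_root by auto

lemma finite_primitive_roots [simp]: "finite (primitive_roots d)"
  unfolding primitive_roots_def by simp

lemma disjoint_primitive_roots:
  "d > 0 \<Longrightarrow> e > 0 \<Longrightarrow> d \<noteq> e \<Longrightarrow> primitive_roots d \<inter> primitive_roots e = {}"
  using exact_order_primitive_root exact_order_unique by blast

lemma inj_on_unit_root:
  assumes "d > 0"
  shows "inj_on (unit_root d) {k. 1 \<le> k \<and> k \<le> d \<and> coprime k d}"
proof
  have root: "exact_order (unit_root d 1) d"
    using exact_order_unit_root[OF assms] by simp
  have mod: "k mod d = (if k = d then 0 else k)" if "k \<in> {k. 1 \<le> k \<and> k \<le> d \<and> coprime k d}" for k
    using that by auto
  fix k l assume k: "k \<in> {k. 1 \<le> k \<and> k \<le> d \<and> coprime k d}" and l: "l \<in> {k. 1 \<le> k \<and> k \<le> d \<and> coprime k d}"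
    and "unit_root d k = unit_root d l"
  then have "unit_root d 1 ^ (k mod d) = unit_root d 1 ^ (l mod d)"
    by (simp only: exact_order_power_mod[OF root]) (simp add: unit_root_power)
  then have "k mod d = l mod d"
    using assms by (intro exact_order_power_eq_imp_eq[OF root]) auto
  with k l show "k = l"
    using mod[OF k] mod[OF l] by (auto split: if_splits)
qed

lemma cyclo_complex_eq_prod_primitive_roots:
  "d > 0 \<Longrightarrow> cyclo_complex d = (\<Prod>z\<in>primitive_roots d. [:- z, 1:])"
  unfolding cyclo_complex_def primitive_roots_def
  by (subst prod.reindex[OF inj_on_unit_root]) (simp_all add: unit_root_def)

lemma prod_linear_dvd_if_roots:
  fixes p :: "'a::idom poly"
  assumes "finite R" "\<And>r. r \<in> R \<Longrightarrow> poly p r = 0"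
  shows "(\<Prod>r\<in>R. [:- r, 1:]) dvd p"
  using assms
proof (induction R arbitrary: p rule: finite_induct)
  case empty
  then show ?case by simp
next
  case (insert a R)
  then obtain s where s: "p = (\<Prod>r\<in>R. [:- r, 1:]) * s"
    by (meson dvdE insert_iff)
  have "poly (\<Prod>r\<in>R. [:- r, 1:]) a \<noteq> 0"
    using insert(1,2) by (auto simp: poly_prod)
  moreover have "poly p a = 0"
    using insert.prems by simp
  ultimately have "[:- a, 1:] dvd s"
    using s by (simp add: poly_eq_0_iff_dvd[symmetric])
  with s insert(1,2) show ?case
    by (auto simp del: mult_pCons_left simp: mult_ac)
qed

lemma roots_unity_eq_UN_primitive_roots:
  assumes "d > 0"
  shows "{z::complex. z ^ d = 1} = (\<Union>e\<in>{e. e dvd d}. primitive_roots e)"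
proof
  show "(\<Union>e\<in>{e. e dvd d}. primitive_roots e) \<subseteq> {z. z ^ d = 1}"
  proof clarify
    fix e z assume "e dvd d" "z \<in> primitive_roots e"
    moreover have "e > 0"
      using \<open>e dvd d\<close> assms by (auto intro: Nat.gr0I)
    ultimately show "z ^ d = 1"
      using exact_order_primitive_root exact_order_power_eq_1_iff by blast
  qed
next
  show "{z. z ^ d = 1} \<subseteq> (\<Union>e\<in>{e. e dvd d}. primitive_roots e)"
  proof
    fix z :: complex assume "z \<in> {z. z ^ d = 1}"
    then obtain m where "m < d" "z = unit_root d m"
      using bij_betw_roots_unity[OF assms] unfolding bij_betw_def unit_root_def by force
    \<comment> \<open>reduce the fraction m/d, writing z = 1 as d/d rather than 0/d\<close>
    define m' where "m' = (if m = 0 then d else m)"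
    have z: "z = unit_root d m'"
      using \<open>z = unit_root d m\<close> unit_root_eq_1_iff[OF assms] by (simp add: m'_def unit_root_def)
    define g where "g = gcd m' d"
    define e where "e = d div g"
    define k where "k = m' div g"
    have "g > 0" "d = e * g" "m' = k * g"
      using assms by (simp_all add: g_def e_def k_def)
    moreover have "1 \<le> m'" "m' \<le> d"
      using \<open>m < d\<close> by (auto simp: m'_def)
    ultimately have "e > 0" "e dvd d" "1 \<le> k" "k \<le> e"
      using assms by (auto intro: Nat.gr0I)
    moreover have "coprime k e"
      unfolding k_def e_def g_def by (rule div_gcd_coprime) (use assms in auto)
    moreover have "unit_root d m' = unit_root e k"
      using \<open>d = e * g\<close> \<open>m' = k * g\<close> \<open>g > 0\<close> by (simp add: unit_root_def mult.assoc)
    ultimately show "z \<in> (\<Union>e\<in>{e. e dvd d}. primitive_roots e)"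
      using z by (auto simp: primitive_roots_def)
  qed
qed

lemma prod_linear_roots_unity:
  assumes "d > 0"
  shows "(\<Prod>z\<in>{z::complex. z ^ d = 1}. [:- z, 1:]) = [:0, 1:] ^ d - 1"
proof -
  let ?P = "\<Prod>z\<in>{z::complex. z ^ d = 1}. [:- z, 1:]"
  let ?Q = "[:0, 1:] ^ d - (1 :: complex poly)"
  have "?P dvd ?Q"
    using assms by (intro prod_linear_dvd_if_roots) (simp_all add: finite_roots_unity poly_monom)
  then obtain s where s: "?Q = ?P * s" ..
  have "degree ([:0, 1:] ^ d + (-1) :: complex poly) = d"
    using assms by (subst degree_add_eq_left) (simp_all add: degree_linear_power)
  then have dQ: "degree ?Q = d" by simp
  have "coeff ([:0, 1:] ^ d) d = (1::complex)"
    using lead_coeff_power[of "[:0, 1::complex:]" d] by (simp add: degree_linear_power)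
  then have lQ: "lead_coeff ?Q = 1"
    using assms dQ by simp
  have dP: "degree ?P = d" and lP: "lead_coeff ?P = 1"
    using card_roots_unity_eq[OF assms] degree_prod_linear[of "\<lambda>z. z" "{z::complex. z ^ d = 1}"]
      coeff_prod_linear_card[of "\<lambda>z. z" "{z::complex. z ^ d = 1}"]
    by simp_all
  have "s \<noteq> 0" "?P \<noteq> 0"
    using s lQ lP by auto
  then have "degree ?Q = degree ?P + degree s"
    using s by (simp add: degree_mult_eq)
  then have "degree s = 0"
    using dP dQ by simp
  moreover have "lead_coeff s = 1"
    using s lP lQ by (simp add: lead_coeff_mult)
  ultimately have "s = 1"
    by (metis degree_0_id one_poly_eq_simps(1))
  then show ?thesis using s by simp
qed

lemma X_power_minus_1_eq_prod_cyclo_complex: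
  assumes "d > 0"
  shows "[:0, 1:] ^ d - 1 = (\<Prod>e\<in>{e. e dvd d}. cyclo_complex e)"
proof -
  have pos: "e > 0" if "e \<in> {e. e dvd d}" for e
    using that assms by (auto intro: Nat.gr0I)
  have "[:0, 1:] ^ d - 1 = (\<Prod>z\<in>(\<Union>e\<in>{e. e dvd d}. primitive_roots e). [:- z, 1:])"
    using prod_linear_roots_unity[OF assms] roots_unity_eq_UN_primitive_roots[OF assms] by simp
  also have "\<dots> = (\<Prod>e\<in>{e. e dvd d}. \<Prod>z\<in>primitive_roots e. [:- z, 1:])"
    using assms pos disjoint_primitive_roots by (intro prod.UNION_disjoint) auto
  also have "\<dots> = (\<Prod>e\<in>{e. e dvd d}. cyclo_complex e)"
    using pos by (simp add: cyclo_complex_eq_prod_primitive_roots)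
  finally show ?thesis .
qed

lemma lead_coeff_cyclo_complex:
  assumes "d > 0"
  shows "lead_coeff (cyclo_complex d) = 1"
  unfolding cyclo_complex_eq_prod_primitive_roots[OF assms] degree_prod_linear
  by (rule coeff_prod_linear_card)

text \<open>X^d - 1 is cyclo_complex d times the product of cyclo_complex e over the proper
  divisors e of d, which by induction is a monic integer polynomial; so the quotient is integral.\<close>

lemma cyclo_complex_integral:
  "d > 0 \<Longrightarrow> \<exists>p. map_poly (of_int :: int \<Rightarrow> complex) p = cyclo_complex d"
proof (induction d rule: less_induct)
  case (less d)
  define E where "E = {e. e dvd d \<and> e < d}"
  have "finite E" and pos: "\<And>e. e \<in> E \<Longrightarrow> e > 0"
    using less.prems by (auto simp: E_def intro: Nat.gr0I)
  have "\<forall>e\<in>E. \<exists>p. map_poly (of_int :: int \<Rightarrow> complex) p = cyclo_complex e"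
    using less.IH pos by (auto simp: E_def)
  then obtain P where P: "\<And>e. e \<in> E \<Longrightarrow> map_poly (of_int :: int \<Rightarrow> complex) (P e) = cyclo_complex e"
    by metis
  define D where "D = (\<Prod>e\<in>E. P e)"
  have D: "map_poly of_int D = (\<Prod>e\<in>E. cyclo_complex e)"
    by (simp add: D_def map_poly_of_int_prod P)
  have "lead_coeff (map_poly (of_int :: int \<Rightarrow> complex) D) = 1"
    unfolding D using pos by (simp add: lead_coeff_prod lead_coeff_cyclo_complex)
  then have "lead_coeff D = 1"
    by simp
  have "{e. e dvd d} = insert d E"
    using less.prems by (auto simp: E_def dest: dvd_imp_le)
  then have X: "map_poly of_int ([:0, 1:] ^ d - 1) = cyclo_complex d * map_poly of_int D"
    using X_power_minus_1_eq_prod_cyclo_complex[OF less.prems] \<open>finite E\<close>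
    by (simp add: D E_def map_poly_of_int_diff map_poly_of_int_power map_poly_pCons)
  then have "D dvd [:0, 1:] ^ d - 1"
    by (intro monic_dvd_if_map_poly_of_int_dvd[where 'a = complex, OF \<open>lead_coeff D = 1\<close>])
      (simp add: mult.commute)
  then obtain r where "[:0, 1:] ^ d - 1 = D * r" ..
  with X have "map_poly of_int D * map_poly of_int r = map_poly of_int D * cyclo_complex d"
    by (simp add: map_poly_of_int_mult mult.commute)
  moreover have "map_poly (of_int :: int \<Rightarrow> complex) D \<noteq> 0"
    using \<open>lead_coeff D = 1\<close> by (auto simp: map_poly_eq_0_iff)
  ultimately show ?case by auto
qed

lemma map_poly_of_int_cyclotomic:
  assumes "d > 0"
  shows "map_poly of_int (cyclotomic d) = cyclo_complex d"
proof -
  obtain p where p: "map_poly (of_int :: int \<Rightarrow> complex) p = cyclo_complex d"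
    using cyclo_complex_integral[OF assms] by blast
  moreover have "cyclotomic d = p"
    unfolding cyclotomic_def
  proof (rule the_equality)
    show "map_poly of_int p = cyclo_complex d" by (fact p)
    show "q = p" if "map_poly (of_int :: int \<Rightarrow> complex) q = cyclo_complex d" for q
      using that p map_poly_of_int_inject[where 'a = complex, of q p] by simp
  qed
  ultimately show ?thesis by simp
qed

lemma prod_cyclotomic_dvd:
  assumes "finite S" "\<And>d. d \<in> S \<Longrightarrow> d > 0"
    and roots: "\<And>d z. d \<in> S \<Longrightarrow> z \<in> primitive_roots d \<Longrightarrow> ipoly z p = 0"
  shows "(\<Prod>d\<in>S. cyclotomic d) dvd p"
proof (rule monic_dvd_if_map_poly_of_int_dvd[where 'a = complex])
  have "map_poly of_int (\<Prod>d\<in>S. cyclotomic d) = (\<Prod>d\<in>S. \<Prod>z\<in>primitive_roots d. [:- z, 1:])"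
    using assms(2) by (simp add: map_poly_of_int_prod map_poly_of_int_cyclotomic
        cyclo_complex_eq_prod_primitive_roots)
  also have "\<dots> = (\<Prod>z\<in>(\<Union>d\<in>S. primitive_roots d). [:- z, 1:])"
    using assms(1,2) disjoint_primitive_roots by (intro prod.UNION_disjoint[symmetric]) auto
  finally have map: "map_poly of_int (\<Prod>d\<in>S. cyclotomic d) = (\<Prod>z\<in>(\<Union>d\<in>S. primitive_roots d). [:- z, 1:])" .
  then show "map_poly (of_int :: int \<Rightarrow> complex) (\<Prod>d\<in>S. cyclotomic d) dvd map_poly of_int p"
    using assms(1) roots by (auto simp: ipoly_def intro!: prod_linear_dvd_if_roots)
  have "lead_coeff (map_poly (of_int :: int \<Rightarrow> complex) (\<Prod>d\<in>S. cyclotomic d)) = 1"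
    unfolding map by (simp add: lead_coeff_prod)
  then show "lead_coeff (\<Prod>d\<in>S. cyclotomic d) = 1"
    by simp
qed

lemma prod_cyclotomic_divisors_dvd:
  assumes "n > 0"
    and roots: "\<And>d (z :: complex). d dvd n \<Longrightarrow> P d \<Longrightarrow> exact_order z d \<Longrightarrow> ipoly z p = 0"
  shows "(\<Prod>d\<in>{d. d dvd n \<and> P d}. cyclotomic d) dvd p"
proof (rule prod_cyclotomic_dvd)
  show "finite {d. d dvd n \<and> P d}"
    by (rule finite_subset[of _ "{..n}"]) (use \<open>n > 0\<close> in \<open>auto dest: dvd_imp_le\<close>)
  show pos: "d > 0" if "d \<in> {d. d dvd n \<and> P d}" for d
    using that \<open>n > 0\<close> by (auto intro: Nat.gr0I)
  show "ipoly z p = 0" if d: "d \<in> {d. d dvd n \<and> P d}" and z: "z \<in> primitive_roots d" for d z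
    using d exact_order_primitive_root[OF pos[OF d] z] by (intro roots) auto
qed

section \<open>The three congruences\<close>

lemma coeff_gsun: "coeff (gsun Q k) j = qbinom Q k j ^ 2 * qbinom Q (2 * j) j"
proof -
  have "coeff (gsun Q k) j = (if j \<in> {0..k} then qbinom Q k j ^ 2 * qbinom Q (2 * j) j else 0)"
    by (simp add: gsun_def coeff_sum coeff_monom sum.delta)
  then show ?thesis
    by (auto simp: qbinom_def)
qed

lemma ipoly_qbinom_X: "ipoly z (qbinom [:0, 1:] n k) = qbinomial z n k"
  using qbinom_X_power[of 1 n k] by (simp add: ipoly_qbinomial)

lemma ipoly_qbinom_X2: "ipoly z (qbinom ([:0, 1:] ^ 2) n k) = qbinomial (z ^ 2) n k"
  by (simp add: qbinom_X_power ipoly_qbinomial)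

lemma ipoly_qint_X2: "ipoly z (qint ([:0, 1:] ^ 2) n) = (\<Sum>i<n. (z ^ 2) ^ i)"
  by (simp add: qint_X_power)

lemma coeff_sum_monom_0_mult: "coeff (\<Sum>k\<in>K. monom (f k) 0 * p k) j = (\<Sum>k\<in>K. f k * coeff (p k) j)"
  by (simp add: coeff_sum monom_0)

lemma weighted_gsun_sum_cong:
  assumes "n > 0"
  shows "congq
           (\<Sum>k=0..n-1. monom ((1 + [:0, 1:]) ^ 2 * [:0, 1:] ^ (2 * k) * qint ([:0, 1:] ^ 2) (k + 1)) 0
              * gsun ([:0, 1:] ^ 2) k)
           (\<Sum>k=0..n-1. monom ([:0, 1:] ^ (2 * k)) 0 * gsun ([:0, 1:] ^ 2) k)
           (\<Prod>d\<in>{d. d dvd n \<and> d > 1 \<and> odd d}. cyclotomic d)"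
    (is "congq ?A ?B ?M")
  unfolding congq_def
proof
  fix j
  have range: "{0..n - Suc 0} = {..<n}" using assms by auto
  show "?M dvd coeff (?A - ?B) j"
  proof (rule prod_cyclotomic_divisors_dvd[OF assms])
    fix d and z :: complex
    assume "d dvd n" "d > 1 \<and> odd d" "exact_order z d"
    have "ipoly z (coeff (?A - ?B) j)
        = (\<Sum>k<n. (1 + z) ^ 2 * z ^ (2 * k) * (\<Sum>i<k + 1. (z ^ 2) ^ i)
              * (qbinomial (z ^ 2) k j ^ 2 * qbinomial (z ^ 2) (2 * j) j))
          - (\<Sum>k<n. z ^ (2 * k) * (qbinomial (z ^ 2) k j ^ 2 * qbinomial (z ^ 2) (2 * j) j))"
      by (simp add: coeff_diff coeff_sum_monom_0_mult coeff_gsun ipoly_qbinom_X2 ipoly_qint_X2 range)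
    also have "\<dots> = (\<Sum>k<n. ((1 + z) ^ 2 * (z ^ 2) ^ k * (\<Sum>i<k + 1. (z ^ 2) ^ i) - (z ^ 2) ^ k)
            * qbinomial (z ^ 2) k j ^ 2) * qbinomial (z ^ 2) (2 * j) j"
      unfolding power_mult sum_subtractf[symmetric] sum_distrib_right
      by (rule sum.cong[OF refl]) algebra
    also have "\<dots> = 0"
      using \<open>d dvd n\<close> \<open>d > 1 \<and> odd d\<close>
      by (intro sum_weighted_qbinomial_square_times_central_eq_0[OF \<open>exact_order z d\<close>]) auto
    finally show "ipoly z (coeff (?A - ?B) j) = 0" .
  qed
qed

lemma gsun_sum_cong_0:
  assumes "n > 0"
  shows "congq (\<Sum>k=0..n-1. monom ([:0, 1:] ^ k) 0 * gsun [:0, 1:] k) 0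
           (\<Prod>d\<in>{d. d dvd n \<and> even d}. cyclotomic d)"
    (is "congq ?A 0 ?M")
  unfolding congq_def
proof
  fix j
  have range: "{0..n - Suc 0} = {..<n}" using assms by auto
  show "?M dvd coeff (?A - 0) j"
  proof (rule prod_cyclotomic_divisors_dvd[OF assms])
    fix d and z :: complex
    assume "d dvd n" "even d" "exact_order z d"
    have "ipoly z (coeff (?A - 0) j) = (\<Sum>k<n. z ^ k * (qbinomial z k j ^ 2 * qbinomial z (2 * j) j))"
      by (simp add: coeff_sum_monom_0_mult coeff_gsun ipoly_qbinom_X range)
    also have "\<dots> = (\<Sum>k<n. z ^ k * qbinomial z k j ^ 2) * qbinomial z (2 * j) j"
      unfolding sum_distrib_right by (simp add: mult_ac)
    also have "\<dots> = 0"
      using \<open>d dvd n\<close> \<open>even d\<close> assms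
      by (intro sum_power_qbinomial_square_times_central_eq_0[OF \<open>exact_order z d\<close>])
        (auto intro: Nat.gr0I)
    finally show "ipoly z (coeff (?A - 0) j) = 0" .
  qed
qed

lemma qbinomial_double_sum_cong_0:
  assumes "n > 0"
  shows "congq
           (\<Sum>j=0..n-1. monom (qint ([:0, 1:] ^ 2) (j + 1) * qbinom [:0, 1:] (2 * j) j *
               (\<Sum>k=j..n-1. [:0, 1:] ^ k * qbinom [:0, 1:] k j * qbinom [:0, 1:] (k + 1) (j + 1))) j)
           0
           (\<Prod>d\<in>{d. d dvd n \<and> d > 2 \<and> even d}. cyclotomic d)"
    (is "congq (\<Sum>j=0..n-1. monom (?c j) j) 0 ?M")
  unfolding congq_def
proof
  fix j
  have coeff: "coeff ((\<Sum>j=0..n-1. monom (?c j) j) - 0) j = (if j \<in> {0..n-1} then ?c j else 0)"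
    by (simp add: coeff_sum coeff_monom sum.delta)
  have "?M dvd ?c j"
  proof (rule prod_cyclotomic_divisors_dvd[OF assms])
    fix d and z :: complex
    assume "d dvd n" "d > 2 \<and> even d" "exact_order z d"
    have "(\<Sum>k=j..n-1. z ^ k * qbinomial z k j * qbinomial z (k + 1) (j + 1))
        = (\<Sum>k<n. z ^ k * qbinomial z k j * qbinomial z (k + 1) (j + 1))"
      using assms by (intro sum.mono_neutral_left) (auto simp: qbinomial_eq_0)
    then have "ipoly z (?c j) = (\<Sum>i<j + 1. (z ^ 2) ^ i) * qbinomial z (2 * j) j
                * (\<Sum>k<n. z ^ k * qbinomial z k j * qbinomial z (k + 1) (j + 1))"
      by (simp add: ipoly_qbinom_X ipoly_qint_X2)
    also have "\<dots> = 0"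
      using \<open>d dvd n\<close> \<open>d > 2 \<and> even d\<close>
      by (intro qint_central_sum_product_eq_0[OF \<open>exact_order z d\<close>]) auto
    finally show "ipoly z (?c j) = 0" .
  qed
  then show "?M dvd coeff ((\<Sum>j=0..n-1. monom (?c j) j) - 0) j"
    unfolding coeff by simp
qed

theorem theorem5:
  fixes n :: nat
  assumes "n > 0"
  defines "q \<equiv> [:0, 1:] :: int poly"
  shows "congq
           (\<Sum>k=0..n-1. monom ((1 + q)^2 * q^(2*k) * qint (q^2) (k+1)) 0 * gsun (q^2) k)
           (\<Sum>k=0..n-1. monom (q^(2*k)) 0 * gsun (q^2) k)
           (\<Prod>d\<in>{d. d dvd n \<and> d > 1 \<and> odd d}. cyclotomic d)
       \<and> congq (\<Sum>k=0..n-1. monom (q^k) 0 * gsun q k) 0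
           (\<Prod>d\<in>{d. d dvd n \<and> even d}. cyclotomic d)
       \<and> congq
           (\<Sum>j=0..n-1. monom (qint (q^2) (j+1) * qbinom q (2*j) j *
               (\<Sum>k=j..n-1. q^k * qbinom q k j * qbinom q (k+1) (j+1))) j)
           0
           (\<Prod>d\<in>{d. d dvd n \<and> d > 2 \<and> even d}. cyclotomic d)"
  using weighted_gsun_sum_cong[OF assms(1)] gsun_sum_cong_0[OF assms(1)]
    qbinomial_double_sum_cong_0[OF assms(1)]
  unfolding q_def by blast

end
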